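(* Let $U\subseteq\mathbb{R}^{p}$ and $V\subseteq\mathbb{R}^{q}$ be closed sets, and let $f:U\times V\to\mathbb{R}$ and $h:U\times V\to\mathbb{R}^m$ be continuous functions. For $y\in V$ define the set-valued map $G(y)=\{x\in U: h(x,y)\ge 0\}$ (inequality componentwise), with domain $\operatorname{dom}G=\{y\in V: G(y)\neq\emptyset\}$. Let $\{x^{(k)}\}_{k\ge 0}\subseteq U$ and $\{y^{(k)}\}_{k\ge0}\subseteq \operatorname{dom} G$ be sequences with $x^{(k)}\to x^*$ and $y^{(k)}\to y^*$, and let $\tau^{(k)}\ge 0$ with $\tau^{(k)}\to 0$ as $k\to\infty$. Assume that for each $k\ge 1$, $x^{(k)}$ is a minimizer of \[ \min_{x\in U}\ f(x,y^{(k)})+\tau^{(k)}\|x-x^{(k-1)}\|^2\quad \text{s.t.}\quad h(x,y^{(k)})\ge 0 . \] If the set-valued map $G$ is inner semicontinuous relative to $\operatorname{dom}G$, then $x^*$ is a minimizer of \[ \min_{x\in U}\ f(x,y^* )\quad\text{s.t.}\quad h(x,y^* )\ge 0 . \]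
   Context: A set-valued map $G$ defined on a set $V$ is inner semicontinuous at $y\in\operatorname{dom}G$ relative to $\operatorname{dom}G$ if for every $x\in G(y)$ and every sequence $\{y_\ell\}\subseteq\operatorname{dom}G$ with $y_\ell\to y$, there exists a sequence $x_\ell\in G(y_\ell)$ with $x_\ell\to x$. It is inner semicontinuous relative to $\operatorname{dom}G$ if this holds at every point of $\operatorname{dom}G$. $\|\cdot\|$ is the Euclidean norm. *)

theory Defs
  imports "HOL-Analysis.Analysis"
begin

definition constr_map ::
  "(real^'p) set \<Rightarrow> (real^'p \<Rightarrow> real^'q \<Rightarrow> real^'m) \<Rightarrow> real^'q \<Rightarrow> (real^'p) set" where
  "constr_map U h y = {x \<in> U. \<forall>i. 0 \<le> h x y $ i}"

definition constr_dom ::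
  "(real^'q) set \<Rightarrow> (real^'q \<Rightarrow> (real^'p) set) \<Rightarrow> (real^'q) set" where
  "constr_dom V G = {y \<in> V. G y \<noteq> {}}"

definition isc_rel :: "('b::topological_space \<Rightarrow> ('a::topological_space) set) \<Rightarrow> 'b set \<Rightarrow> bool" where
  "isc_rel G D \<longleftrightarrow>
     (\<forall>y\<in>D. \<forall>x\<in>G y. \<forall>ys. (\<forall>l. ys l \<in> D) \<and> ys \<longlonglongrightarrow> y \<longrightarrow>
        (\<exists>xs. (\<forall>l. xs l \<in> G (ys l)) \<and> xs \<longlonglongrightarrow> x))"

end

theory Submission
  imports Defs
begin

text \<open>Feasibility of the limit passes through because the constraint map has a closed graph
  (\<open>U\<close> is closed and \<open>h\<close> continuous). For optimality, inner semicontinuity approximates a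
  feasible competitor \<open>x\<close> at \<open>y*\<close> by points feasible at the \<open>y\<^sub>k\<close>; compare these with the
  minimizers \<open>x\<^sub>k\<close>, drop the minimizers' nonnegative proximal term and let \<open>k \<rightarrow> \<infinity>\<close>: the
  competitors' proximal term vanishes because \<open>\<tau>\<^sub>k \<rightarrow> 0\<close> and the iterates converge.\<close>

lemma tendsto_continuous_on_pair_compose:
  assumes "continuous_on (U \<times> V) (\<lambda>(x, y). g x y)"
    and "(a \<longlongrightarrow> x) F" and "(b \<longlongrightarrow> y) F" and "x \<in> U" and "y \<in> V"
    and "\<forall>\<^sub>F t in F. a t \<in> U \<and> b t \<in> V"
  shows "((\<lambda>t. g (a t) (b t)) \<longlongrightarrow> g x y) F"
  using continuous_on_tendsto_compose[OF assms(1) tendsto_Pair[OF assms(2,3)]] assms(4-6)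
  by simp

lemma constr_map_limit:
  fixes h :: "real^'p \<Rightarrow> real^'q \<Rightarrow> real^'m"
  assumes "closed U" and "continuous_on (U \<times> V) (\<lambda>(x, y). h x y)"
    and "(xs \<longlongrightarrow> x) F" and "(ys \<longlongrightarrow> y) F" and "y \<in> V" and "F \<noteq> bot"
    and feasible: "\<forall>\<^sub>F t in F. xs t \<in> constr_map U h (ys t) \<and> ys t \<in> V"
  shows "x \<in> constr_map U h y"
proof -
  have in_U: "\<forall>\<^sub>F t in F. xs t \<in> U"
    using feasible by eventually_elim (simp add: constr_map_def)
  have "x \<in> U"
    using Lim_in_closed_set[OF assms(1) in_U assms(6,3)] .
  have h_lim: "((\<lambda>t. h (xs t) (ys t)) \<longlongrightarrow> h x y) F"
    using feasible by (intro tendsto_continuous_on_pair_compose[OF assms(2-4) \<open>x \<in> U\<close> assms(5)])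
      (auto simp: constr_map_def elim: eventually_mono)
  have "0 \<le> h x y $ i" for i
  proof (rule tendsto_lowerbound[OF tendsto_vec_nth[OF h_lim] _ assms(6)])
    show "\<forall>\<^sub>F t in F. 0 \<le> h (xs t) (ys t) $ i"
      using feasible by eventually_elim (simp add: constr_map_def)
  qed
  with \<open>x \<in> U\<close> show ?thesis
    by (simp add: constr_map_def)
qed

lemma proximal_minimizers_limit_le:
  fixes f :: "'a::real_normed_vector \<Rightarrow> 'b::topological_space \<Rightarrow> real"
  assumes f_cont: "continuous_on (U \<times> V) (\<lambda>(x, y). f x y)"
    and "(xs \<longlongrightarrow> x) F" and "(xs' \<longlongrightarrow> x') F" and "(ys \<longlongrightarrow> y) F" and "(zs \<longlongrightarrow> z) F"
    and "(\<tau> \<longlongrightarrow> 0) F" and "x \<in> U" and "x' \<in> U" and "y \<in> V" and "F \<noteq> bot"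
    and in_dom: "\<forall>\<^sub>F t in F. xs t \<in> U \<and> xs' t \<in> U \<and> ys t \<in> V"
    and minimal: "\<forall>\<^sub>F t in F. 0 \<le> \<tau> t \<and>
      f (xs t) (ys t) + \<tau> t * (norm (xs t - zs t))\<^sup>2 \<le> f (xs' t) (ys t) + \<tau> t * (norm (xs' t - zs t))\<^sup>2"
  shows "f x y \<le> f x' y"
proof (rule tendsto_le[OF assms(10)])
  show "((\<lambda>t. f (xs t) (ys t)) \<longlongrightarrow> f x y) F"
    using in_dom by (intro tendsto_continuous_on_pair_compose[OF f_cont assms(2,4,7,9)])
      (auto elim: eventually_mono)
  have "((\<lambda>t. f (xs' t) (ys t)) \<longlongrightarrow> f x' y) F"
    using in_dom by (intro tendsto_continuous_on_pair_compose[OF f_cont assms(3,4,8,9)])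
      (auto elim: eventually_mono)
  then have "((\<lambda>t. f (xs' t) (ys t) + \<tau> t * (norm (xs' t - zs t))\<^sup>2)
      \<longlongrightarrow> f x' y + 0 * (norm (x' - z))\<^sup>2) F"
    by (intro tendsto_intros assms(3,5,6))
  then show "((\<lambda>t. f (xs' t) (ys t) + \<tau> t * (norm (xs' t - zs t))\<^sup>2) \<longlongrightarrow> f x' y) F"
    by simp
  show "\<forall>\<^sub>F t in F. f (xs t) (ys t) \<le> f (xs' t) (ys t) + \<tau> t * (norm (xs' t - zs t))\<^sup>2"
    using minimal by eventually_elim (smt (verit) mult_nonneg_nonneg zero_le_power2)
qed

theorem lemma3p6:
  fixes U :: "(real^'p) set" and V :: "(real^'q) set"
    and f :: "real^'p \<Rightarrow> real^'q \<Rightarrow> real"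
    and h :: "real^'p \<Rightarrow> real^'q \<Rightarrow> real^'m"
    and xk :: "nat \<Rightarrow> real^'p" and yk :: "nat \<Rightarrow> real^'q"
    and xstar :: "real^'p" and ystar :: "real^'q"
    and \<tau> :: "nat \<Rightarrow> real"
  assumes "closed U" and "closed V"
    and "continuous_on (U \<times> V) (\<lambda>(x, y). f x y)"
    and "continuous_on (U \<times> V) (\<lambda>(x, y). h x y)"
    and "\<forall>k. xk k \<in> U"
    and "\<forall>k. yk k \<in> constr_dom V (constr_map U h)"
    and "xk \<longlonglongrightarrow> xstar" and "yk \<longlonglongrightarrow> ystar"
    and "\<forall>k. \<tau> k \<ge> 0" and "\<tau> \<longlonglongrightarrow> 0"
    and "\<forall>k\<ge>1. xk k \<in> constr_map U h (yk k) \<and>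
           (\<forall>x \<in> constr_map U h (yk k).
              f (xk k) (yk k) + \<tau> k * (norm (xk k - xk (k - 1)))\<^sup>2
              \<le> f x (yk k) + \<tau> k * (norm (x - xk (k - 1)))\<^sup>2)"
    and "isc_rel (constr_map U h) (constr_dom V (constr_map U h))"
  shows "xstar \<in> constr_map U h ystar \<and>
         (\<forall>x \<in> constr_map U h ystar. f xstar ystar \<le> f x ystar)"
proof -
  have yk_V: "yk k \<in> V" for k
    using assms(6) by (simp add: constr_dom_def)
  have ystar_V: "ystar \<in> V"
    using assms(2,8) yk_V closed_sequentially by blast
  have xstar_feasible: "xstar \<in> constr_map U h ystar"
    using assms(11) yk_V
    by (intro constr_map_limit[OF assms(1,4,7,8) ystar_V]) (auto simp: eventually_sequentially)
  moreover have "f xstar ystar \<le> f x ystar" if x: "x \<in> constr_map U h ystar" for x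
  proof -
    have "ystar \<in> constr_dom V (constr_map U h)"
      using xstar_feasible ystar_V by (auto simp: constr_dom_def)
    then obtain xs where xs: "\<forall>k. xs k \<in> constr_map U h (yk k)" "xs \<longlonglongrightarrow> x"
      using assms(6,8,12) x unfolding isc_rel_def by blast
    have "(\<lambda>k. xk (k - 1)) \<longlonglongrightarrow> xstar"
      using filterlim_compose[OF assms(7) filterlim_minus_const_nat_at_top] .
    moreover have "f (xk k) (yk k) + \<tau> k * (norm (xk k - xk (k - 1)))\<^sup>2
        \<le> f (xs k) (yk k) + \<tau> k * (norm (xs k - xk (k - 1)))\<^sup>2" if "k \<ge> 1" for k
      using assms(11) xs(1) that by blast
    ultimately show ?thesis
      using assms(5,9) xs(1) yk_V ystar_V x xstar_feasible
      by (intro proximal_minimizers_limit_le[OF assms(3,7) xs(2) assms(8) _ assms(10)])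
        (auto simp: constr_map_def eventually_sequentially)
  qed
  ultimately show ?thesis
    by blast
qed

end
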